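(* If $V=Mod(\Sigma)$ is a stable non-trivial variety of semigroups, then $\Sigma\models f(f(x_1,x_1),x_1)\approx f(x_1,x_1)$.
   Context: Type $\tau=(2)$: a single binary operation symbol $f$; terms over $X=\{x_1,x_2,\dots\}$, $W_\tau(X_n)$ terms in $x_1,\dots,x_n$. A semigroup variety is a variety of groupoids satisfying associativity $f(x_1,f(x_2,x_3))\approx f(f(x_1,x_2),x_3)$; non-trivial means it contains an algebra with more than one element. $\Sigma\models t\approx s$: every groupoid satisfying $\Sigma$ satisfies $t\approx s$. Positions $Pos(t)\subseteq\{1,2\}^*$ (root $\varepsilon$, children $p1,p2$), $sub_t(p)$ the subterm at $p$, $\preceq$ prefix order, $t(p;r)$ replacement at $p$. A position $p\in Pos(t)$, $t\in W_\tau(X_n)$, is $\Sigma$-essential if there is an algebra $\mathcal A\models\Sigma$ in which the term operation of $t(p;x_{n+1})$ depends on $x_{n+1}$ (changing only the value of $x_{n+1}$ can change the result); $PEss(t,\Sigma)$ is the set of these. $SEss(t,\Sigma)=\{r\mid \Sigma\models r\approx sub_t(p),\ p\in PEss(t,\Sigma)\}$. $P_r^t$ is the set of $\preceq$-minimal elements of $\{p\in Pos(t)\mid\Sigma\models sub_t(p)\approx r\}$; $t^\Sigma(r\leftarrow u)=t$ if $P_r^t=\emptyset$, else $t$ with subterms at all positions of $P_r^t$ replaced by $u$. $V$ is stable if, with $\Sigma=Id(V)$: $t\approx s\in\Sigma$ and $r\in SEss(t,\Sigma)\cap SEss(s,\Sigma)$ imply $t^\Sigma(r\leftarrow u)\approx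 s^\Sigma(r\leftarrow u)\in\Sigma$ for all $u$. *)

theory Defs
  imports "HOL-Library.Sublist"
begin

datatype trm = Var nat | F trm trm

fun maxvar :: "trm \<Rightarrow> nat" where
  "maxvar (Var i) = i"
| "maxvar (F a b) = max (maxvar a) (maxvar b)"

fun eval :: "(nat \<Rightarrow> nat \<Rightarrow> nat) \<Rightarrow> (nat \<Rightarrow> nat) \<Rightarrow> trm \<Rightarrow> nat" where
  "eval op \<sigma> (Var i) = \<sigma> i"
| "eval op \<sigma> (F a b) = op (eval op \<sigma> a) (eval op \<sigma> b)"

type_synonym idnt = "trm \<times> trm"

definition groupoid :: "nat set \<Rightarrow> (nat \<Rightarrow> nat \<Rightarrow> nat) \<Rightarrow> bool" where
  "groupoid C op \<longleftrightarrow> C \<noteq> {} \<and> (\<forall>a\<in>C. \<forall>b\<in>C. op a b \<in> C)"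

definition holds :: "nat set \<Rightarrow> (nat \<Rightarrow> nat \<Rightarrow> nat) \<Rightarrow> idnt \<Rightarrow> bool" where
  "holds C op e \<longleftrightarrow> (\<forall>\<sigma>. (\<forall>i. \<sigma> i \<in> C) \<longrightarrow> eval op \<sigma> (fst e) = eval op \<sigma> (snd e))"

definition is_model :: "nat set \<Rightarrow> (nat \<Rightarrow> nat \<Rightarrow> nat) \<Rightarrow> idnt set \<Rightarrow> bool" where
  "is_model C op \<Sigma> \<longleftrightarrow> groupoid C op \<and> (\<forall>e\<in>\<Sigma>. holds C op e)"

definition entails :: "idnt set \<Rightarrow> trm \<Rightarrow> trm \<Rightarrow> bool" where
  "entails \<Sigma> t s \<longleftrightarrow> (\<forall>C op. is_model C op \<Sigma> \<longrightarrow> holds C op (t, s))"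

definition Id_of :: "idnt set \<Rightarrow> idnt set" where
  "Id_of \<Sigma> = {(t, s). entails \<Sigma> t s}"

definition semigroup_variety :: "idnt set \<Rightarrow> bool" where
  "semigroup_variety \<Sigma> \<longleftrightarrow>
     entails \<Sigma> (F (Var 1) (F (Var 2) (Var 3))) (F (F (Var 1) (Var 2)) (Var 3))"

definition nontrivial :: "idnt set \<Rightarrow> bool" where
  "nontrivial \<Sigma> \<longleftrightarrow> (\<exists>C op. is_model C op \<Sigma> \<and> (\<exists>a\<in>C. \<exists>b\<in>C. a \<noteq> b))"

fun Pos :: "trm \<Rightarrow> nat list set" where
  "Pos (Var i) = {[]}"
| "Pos (F a b) = {[]} \<union> Cons 1 ` Pos a \<union> Cons 2 ` Pos b"

fun sub :: "trm \<Rightarrow> nat list \<Rightarrow> trm" where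
  "sub t [] = t"
| "sub (F a b) (k # p) = (if k = 1 then sub a p else sub b p)"
| "sub (Var i) (k # p) = Var i"

fun repl :: "trm \<Rightarrow> nat list \<Rightarrow> trm \<Rightarrow> trm" where
  "repl t [] r = r"
| "repl (F a b) (k # p) r = (if k = 1 then F (repl a p r) b else F a (repl b p r))"
| "repl (Var i) (k # p) r = Var i"

text \<open>Replace the subterms at all positions of a set of (pairwise incomparable) positions.\<close>
fun repl_set :: "trm \<Rightarrow> nat list set \<Rightarrow> trm \<Rightarrow> trm" where
  "repl_set (Var i) P u = (if [] \<in> P then u else Var i)"
| "repl_set (F a b) P u = (if [] \<in> P then u else
      F (repl_set a {p. 1 # p \<in> P} u) (repl_set b {p. 2 # p \<in> P} u))"

definition depends_on :: "nat set \<Rightarrow> (nat \<Rightarrow> nat \<Rightarrow> nat) \<Rightarrow> trm \<Rightarrow> nat \<Rightarrow> bool" where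
  "depends_on C op t k \<longleftrightarrow> (\<exists>\<sigma> a. (\<forall>i. \<sigma> i \<in> C) \<and> a \<in> C \<and>
       eval op \<sigma> t \<noteq> eval op (\<sigma>(k := a)) t)"

text \<open>t \<in> W(X_n) with n = maxvar t; x_{n+1} is the fresh variable.\<close>
definition PEss :: "trm \<Rightarrow> idnt set \<Rightarrow> nat list set" where
  "PEss t \<Sigma> = {p \<in> Pos t. \<exists>C op. is_model C op \<Sigma> \<and>
       depends_on C op (repl t p (Var (Suc (maxvar t)))) (Suc (maxvar t))}"

definition SEss :: "trm \<Rightarrow> idnt set \<Rightarrow> trm set" where
  "SEss t \<Sigma> = {r. \<exists>p \<in> PEss t \<Sigma>. entails \<Sigma> r (sub t p)}"

definition Pr :: "idnt set \<Rightarrow> trm \<Rightarrow> trm \<Rightarrow> nat list set" where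
  "Pr \<Sigma> r t = {p \<in> Pos t. entails \<Sigma> (sub t p) r \<and>
       \<not> (\<exists>q \<in> Pos t. entails \<Sigma> (sub t q) r \<and> strict_prefix q p)}"

definition replS :: "idnt set \<Rightarrow> trm \<Rightarrow> trm \<Rightarrow> trm \<Rightarrow> trm" where
  "replS \<Sigma> t r u = (if Pr \<Sigma> r t = {} then t else repl_set t (Pr \<Sigma> r t) u)"

definition stable :: "idnt set \<Rightarrow> bool" where
  "stable \<Sigma>0 \<longleftrightarrow> (let \<Sigma> = Id_of \<Sigma>0 in
     \<forall>t s r u. (t, s) \<in> \<Sigma> \<longrightarrow> r \<in> SEss t \<Sigma> \<inter> SEss s \<Sigma> \<longrightarrow>
        (replS \<Sigma> t r u, replS \<Sigma> s r u) \<in> \<Sigma>)"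

end

theory Submission
  imports Defs
begin

text \<open>
  The only tool beyond
  associativity is stability: if t = s is entailed and a subterm r occurs in an
  essential position on both sides, then replacing the outermost occurrences of r by a
  new variable yields another entailed identity.  Arguing by contradiction, each such
  replacement with r = x x produces an identity that collapses to the absorption law:
  first we obtain commutativity from x (x x) = (x x) x; then, if (x x) y does not
  depend on y, replacing in (x x) x = (x x) y shows that multiplication ignores its
  right argument; otherwise, in the commutative case, two further replacements show
  first that x x is idempotent and then the absorption law itself.
\<close>

abbreviation vx :: trm where "vx \<equiv> Var 1"
abbreviation vy :: trm where "vy \<equiv> Var 2"
abbreviation vz :: trm where "vz \<equiv> Var 3"
abbreviation sq :: "trm \<Rightarrow> trm" where "sq t \<equiv> F t t"

lemma entailsI:
  assumes "\<And>C op \<sigma>. is_model C op \<Sigma> \<Longrightarrow> (\<And>i. \<sigma> i \<in> C) \<Longrightarrow> eval op \<sigma> t = eval op \<sigma> s"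
  shows "entails \<Sigma> t s"
  using assms unfolding entails_def holds_def by auto

lemma entailsD:
  assumes "entails \<Sigma> t s" and "is_model C op \<Sigma>" and "\<And>i. \<sigma> i \<in> C"
  shows "eval op \<sigma> t = eval op \<sigma> s"
  using assms unfolding entails_def holds_def by auto

lemma not_entailsE:
  assumes "\<not> entails \<Sigma> t s"
  obtains C op \<sigma> where "is_model C op \<Sigma>" and "\<And>i. \<sigma> i \<in> C" and "eval op \<sigma> t \<noteq> eval op \<sigma> s"
  using assms unfolding entails_def holds_def by auto

lemma entails_refl [simp]: "entails \<Sigma> t t"
  by (simp add: entails_def holds_def)

lemma entails_sym: "entails \<Sigma> t s \<Longrightarrow> entails \<Sigma> s t"
  by (simp add: entails_def holds_def)

lemma entails_trans: "entails \<Sigma> t s \<Longrightarrow> entails \<Sigma> s r \<Longrightarrow> entails \<Sigma> t r"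
  by (simp add: entails_def holds_def)

lemma model_closed: "is_model C op \<Sigma> \<Longrightarrow> a \<in> C \<Longrightarrow> b \<in> C \<Longrightarrow> op a b \<in> C"
  unfolding is_model_def groupoid_def by auto

lemma eval_closed:
  assumes "is_model C op \<Sigma>" and "\<And>i. \<sigma> i \<in> C"
  shows "eval op \<sigma> t \<in> C"
  using assms by (induction t) (auto simp: is_model_def groupoid_def)

fun subst :: "(nat \<Rightarrow> trm) \<Rightarrow> trm \<Rightarrow> trm" where
  "subst \<theta> (Var i) = \<theta> i"
| "subst \<theta> (F a b) = F (subst \<theta> a) (subst \<theta> b)"

lemma eval_subst: "eval op \<sigma> (subst \<theta> t) = eval op (\<lambda>i. eval op \<sigma> (\<theta> i)) t"
  by (induction t) auto

lemma entails_subst: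
  assumes "entails \<Sigma> t s"
  shows "entails \<Sigma> (subst \<theta> t) (subst \<theta> s)"
proof (rule entailsI)
  fix C op and \<sigma> :: "nat \<Rightarrow> nat"
  assume "is_model C op \<Sigma>" and "\<And>i. \<sigma> i \<in> C"
  then show "eval op \<sigma> (subst \<theta> t) = eval op \<sigma> (subst \<theta> s)"
    unfolding eval_subst by (intro entailsD[OF assms]) (auto intro: eval_closed)
qed

lemma assoc_entails:
  assumes "semigroup_variety \<Sigma>"
  shows "entails \<Sigma> (F a (F b c)) (F (F a b) c)"
  using entails_subst[OF assms[unfolded semigroup_variety_def],
      of "\<lambda>i. if i = 1 then a else if i = 2 then b else c"] by simp

lemma model_assoc:
  assumes "semigroup_variety \<Sigma>" and "is_model C op \<Sigma>" and "a \<in> C" "b \<in> C" "c \<in> C"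
  shows "op (op a b) c = op a (op b c)"
  using entailsD[OF assms(1)[unfolded semigroup_variety_def] assms(2),
      of "\<lambda>i. if i = 1 then a else if i = 2 then b else c"] assms(3-5) by auto

lemma model_comm:
  assumes "entails \<Sigma> (F vx vy) (F vy vx)" and "is_model C op \<Sigma>" and "a \<in> C" "b \<in> C"
  shows "op a b = op b a"
  using entailsD[OF assms(1,2), of "\<lambda>i. if i = 1 then a else b"] assms(3,4) by auto

lemma Nil_in_Pos [simp]: "[] \<in> Pos t"
  by (cases t) auto

lemma repl_set_empty [simp]: "repl_set t {} u = t"
  by (induction t) auto

lemma Pr_Var: "Pr \<Sigma> r (Var i) = (if entails \<Sigma> (Var i) r then {[]} else {})"
  unfolding Pr_def by auto

lemma Pr_F:
  "Pr \<Sigma> r (F a b) =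
    (if entails \<Sigma> (F a b) r then {[]} else Cons 1 ` Pr \<Sigma> r a \<union> Cons 2 ` Pr \<Sigma> r b)"
proof (cases "entails \<Sigma> (F a b) r")
  case True
  then show ?thesis
    unfolding Pr_def by (auto intro: bexI[of _ "[]"] simp: neq_Nil_conv)
next
  case False
  have "Pr \<Sigma> r (F a b) = Cons 1 ` Pr \<Sigma> r a \<union> Cons 2 ` Pr \<Sigma> r b"
  proof (rule set_eqI)
    fix p
    show "p \<in> Pr \<Sigma> r (F a b) \<longleftrightarrow> p \<in> Cons 1 ` Pr \<Sigma> r a \<union> Cons 2 ` Pr \<Sigma> r b"
      using False by (cases p) (auto simp: Pr_def ball_Un Ball_image_comp)
  qed
  with False show ?thesis by simp
qed

lemma replS_Var: "replS \<Sigma> (Var i) r u = (if entails \<Sigma> (Var i) r then u else Var i)"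
  unfolding replS_def Pr_Var by simp

lemma replS_F:
  "replS \<Sigma> (F a b) r u =
    (if entails \<Sigma> (F a b) r then u else F (replS \<Sigma> a r u) (replS \<Sigma> b r u))"
proof -
  have replS_repl_set: "replS \<Sigma> t r u = repl_set t (Pr \<Sigma> r t) u" for t
    unfolding replS_def by simp
  show ?thesis
    unfolding replS_repl_set Pr_F by (auto simp: image_iff)
qed

lemma is_model_Id_of: "is_model C op (Id_of \<Sigma>) \<longleftrightarrow> is_model C op \<Sigma>"
  unfolding is_model_def Id_of_def entails_def by auto

lemma entails_Id_of: "entails (Id_of \<Sigma>) = entails \<Sigma>"
  unfolding entails_def[abs_def] is_model_Id_of by simp

lemma stable_replace:
  assumes "stable \<Sigma>" and "entails \<Sigma> t s"
    and "p \<in> PEss t \<Sigma>" and "q \<in> PEss s \<Sigma>"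
    and "entails \<Sigma> (sub t p) r" and "entails \<Sigma> (sub s q) r"
  shows "entails \<Sigma> (replS \<Sigma> t r u) (replS \<Sigma> s r u)"
proof -
  have PEss_Id: "PEss w (Id_of \<Sigma>) = PEss w \<Sigma>" for w
    unfolding PEss_def is_model_Id_of ..
  have replS_Id: "replS (Id_of \<Sigma>) = replS \<Sigma>"
    unfolding replS_def[abs_def] Pr_def[abs_def] entails_Id_of ..
  have "r \<in> SEss t (Id_of \<Sigma>)" and "r \<in> SEss s (Id_of \<Sigma>)"
    using assms(3-6) unfolding SEss_def PEss_Id entails_Id_of by (auto intro: entails_sym)
  moreover have "(t, s) \<in> Id_of \<Sigma>"
    using assms(2) by (simp add: Id_of_def)
  ultimately have "(replS (Id_of \<Sigma>) t r u, replS (Id_of \<Sigma>) s r u) \<in> Id_of \<Sigma>"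
    using assms(1) unfolding stable_def Let_def by blast
  then show ?thesis
    unfolding replS_Id by (simp add: Id_of_def)
qed

lemma PEss_left_factor:
  assumes "\<not> entails \<Sigma> (F vx vz) (F vy vz)"
  shows "[1] \<in> PEss (F a (Var i)) \<Sigma>"
proof -
  obtain C op and \<sigma> :: "nat \<Rightarrow> nat" where model: "is_model C op \<Sigma>" and vals: "\<And>j. \<sigma> j \<in> C"
    and differ: "op (\<sigma> 1) (\<sigma> 3) \<noteq> op (\<sigma> 2) (\<sigma> 3)"
    using assms by (elim not_entailsE) auto
  define n where "n = Suc (max (maxvar a) i)"
  have "i \<noteq> n"
    by (simp add: n_def)
  then have "depends_on C op (F (Var n) (Var i)) n"
    unfolding depends_on_def using vals differ
    by (intro exI[of _ "\<sigma>(i := \<sigma> 3, n := \<sigma> 1)"] exI[of _ "\<sigma> 2"]) auto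
  with model show ?thesis
    unfolding PEss_def n_def by auto
qed

lemma PEss_right_factor:
  assumes "\<not> entails \<Sigma> (F vz vx) (F vz vy)"
  shows "[2] \<in> PEss (F (Var i) b) \<Sigma>"
proof -
  obtain C op and \<sigma> :: "nat \<Rightarrow> nat" where model: "is_model C op \<Sigma>" and vals: "\<And>j. \<sigma> j \<in> C"
    and differ: "op (\<sigma> 3) (\<sigma> 1) \<noteq> op (\<sigma> 3) (\<sigma> 2)"
    using assms by (elim not_entailsE) auto
  define n where "n = Suc (max i (maxvar b))"
  have "i \<noteq> n"
    by (simp add: n_def)
  then have "depends_on C op (F (Var i) (Var n)) n"
    unfolding depends_on_def using vals differ
    by (intro exI[of _ "\<sigma>(i := \<sigma> 3, n := \<sigma> 1)"] exI[of _ "\<sigma> 2"]) auto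
  with model show ?thesis
    unfolding PEss_def n_def by auto
qed

text \<open>Several identities each imply the absorption law (x x) x = x x.  They
  are used to show that certain subterms are not equivalent to x x when the law fails.\<close>
lemma absorption_if_var_eq_sq:
  assumes "entails \<Sigma> (Var i) (sq vx)"
  shows "entails \<Sigma> (F (sq vx) vx) (sq vx)"
proof (rule entailsI)
  fix C op and \<sigma> :: "nat \<Rightarrow> nat"
  assume model: "is_model C op \<Sigma>" and vals: "\<And>j. \<sigma> j \<in> C"
  have "op (\<sigma> 1) (\<sigma> 1) = \<sigma> 1"
    using entailsD[OF assms model, of "\<lambda>_. \<sigma> 1"] vals by simp
  then show "eval op \<sigma> (F (sq vx) vx) = eval op \<sigma> (sq vx)"
    by simp
qed

lemma absorption_if_sq_var_eq_sq:
  assumes "entails \<Sigma> (F (sq vx) (Var i)) (sq vx)"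
  shows "entails \<Sigma> (F (sq vx) vx) (sq vx)"
  using entails_subst[OF assms, of "\<lambda>_. vx"] by simp

lemma absorption_if_x_sq_eq_sq:
  assumes "semigroup_variety \<Sigma>" and "entails \<Sigma> (F vx (sq vx)) (sq vx)"
  shows "entails \<Sigma> (F (sq vx) vx) (sq vx)"
  using entails_trans[OF entails_sym[OF assoc_entails[OF assms(1)]] assms(2)] .

lemma absorption_if_left_constant:
  assumes "entails \<Sigma> (F vx vz) (F vy vz)"
  shows "entails \<Sigma> (F (sq vx) vx) (sq vx)"
  using entails_subst[OF assms, of "\<lambda>i. if i = 1 then sq vx else vx"] by simp

lemma absorption_if_right_constant:
  assumes "semigroup_variety \<Sigma>" and "entails \<Sigma> (F vz vx) (F vz vy)"
  shows "entails \<Sigma> (F (sq vx) vx) (sq vx)"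
proof -
  have "entails \<Sigma> (sq vx) (F vx (sq vx))"
    using entails_subst[OF assms(2), of "\<lambda>i. if i = 2 then sq vx else vx"] by simp
  then show ?thesis
    by (rule absorption_if_x_sq_eq_sq[OF assms(1) entails_sym])
qed

lemma sq_idempotent_if_absorption:
  assumes sg: "semigroup_variety \<Sigma>" and goal: "entails \<Sigma> (F (sq vx) vx) (sq vx)"
  shows "entails \<Sigma> (sq (sq vx)) (sq vx)"
proof (rule entailsI)
  fix C op and \<sigma> :: "nat \<Rightarrow> nat"
  assume model: "is_model C op \<Sigma>" and vals: "\<And>j. \<sigma> j \<in> C"
  define a where "a = \<sigma> 1"
  have a: "a \<in> C" and aa: "op a a \<in> C"
    using vals model_closed[OF model] by (auto simp: a_def)
  have absorb: "op (op a a) a = op a a"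
    using entailsD[OF goal model, of "\<lambda>_. a"] a by simp
  have "op (op a a) (op a a) = op (op (op a a) a) a"
    using model_assoc[OF sg model aa a a] by simp
  also have "\<dots> = op a a"
    using absorb by simp
  finally show "eval op \<sigma> (sq (sq vx)) = eval op \<sigma> (sq vx)"
    by (simp add: a_def)
qed

text \<open>First step: x (x x) = (x x) x, with x x essential on both sides; replacing
  x x by y yields commutativity x y = y x.\<close>
lemma stable_commutative_or_absorption:
  assumes sg: "semigroup_variety \<Sigma>" and st: "stable \<Sigma>"
  shows "entails \<Sigma> (F vx vy) (F vy vx) \<or> entails \<Sigma> (F (sq vx) vx) (sq vx)"
proof (rule disjCI)
  assume absorption_fails: "\<not> entails \<Sigma> (F (sq vx) vx) (sq vx)"
  have ess_right: "[2] \<in> PEss (F vx (sq vx)) \<Sigma>"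
    using absorption_fails absorption_if_right_constant[OF sg] by (blast intro: PEss_right_factor)
  have ess_left: "[1] \<in> PEss (F (sq vx) vx) \<Sigma>"
    using absorption_fails absorption_if_left_constant by (blast intro: PEss_left_factor)
  have "entails \<Sigma> (replS \<Sigma> (F vx (sq vx)) (sq vx) vy) (replS \<Sigma> (F (sq vx) vx) (sq vx) vy)"
    by (rule stable_replace[OF st assoc_entails[OF sg] ess_right ess_left]) simp_all
  moreover have "\<not> entails \<Sigma> vx (sq vx)" and "\<not> entails \<Sigma> (F vx (sq vx)) (sq vx)"
    using absorption_fails absorption_if_var_eq_sq absorption_if_x_sq_eq_sq[OF sg] by blast+
  ultimately show "entails \<Sigma> (F vx vy) (F vy vx)"
    using absorption_fails by (simp add: replS_F replS_Var)
qed

text \<open>If (x x) x = (x x) y, replacing the essential factor x x by z gives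
  z x = z y, so multiplication ignores its right argument.\<close>
lemma stable_absorption_if_sq_left_constant:
  assumes sg: "semigroup_variety \<Sigma>" and st: "stable \<Sigma>"
    and const: "entails \<Sigma> (F (sq vx) vx) (F (sq vx) vy)"
  shows "entails \<Sigma> (F (sq vx) vx) (sq vx)"
proof (rule ccontr)
  assume absorption_fails: "\<not> entails \<Sigma> (F (sq vx) vx) (sq vx)"
  have ess: "[1] \<in> PEss (F (sq vx) (Var i)) \<Sigma>" for i
    using absorption_fails absorption_if_left_constant by (blast intro: PEss_left_factor)
  have "entails \<Sigma> (replS \<Sigma> (F (sq vx) vx) (sq vx) vz) (replS \<Sigma> (F (sq vx) vy) (sq vx) vz)"
    by (rule stable_replace[OF st const ess ess]) simp_all
  moreover have "\<not> entails \<Sigma> (Var i) (sq vx)" and "\<not> entails \<Sigma> (F (sq vx) (Var i)) (sq vx)" for i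
    using absorption_fails absorption_if_var_eq_sq absorption_if_sq_var_eq_sq by blast+
  ultimately have "entails \<Sigma> (F vz vx) (F vz vy)"
    by (simp add: replS_F replS_Var)
  then show False
    using absorption_fails absorption_if_right_constant[OF sg] by blast
qed

lemma sq_not_left_constantE:
  assumes "\<not> entails \<Sigma> (F (sq vx) vx) (F (sq vx) vy)"
  obtains C op a c where "is_model C op \<Sigma>" and "a \<in> C" and "c \<in> C"
    and "op (op a a) a \<noteq> op (op a a) c"
proof -
  obtain C op and \<sigma> :: "nat \<Rightarrow> nat" where "is_model C op \<Sigma>" and "\<And>j. \<sigma> j \<in> C"
    and "op (op (\<sigma> 1) (\<sigma> 1)) (\<sigma> 1) \<noteq> op (op (\<sigma> 1) (\<sigma> 1)) (\<sigma> 2)"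
    using assms by (elim not_entailsE) auto
  then show ?thesis
    using that by blast
qed

text \<open>Otherwise
  (x x)(x x) = x ((x x) x) and replacing x x by y gives y y = x (y x), which collapses to
  x x = x (x x) and hence to the absorption law.\<close>
lemma stable_commutative_sq_idempotent:
  assumes sg: "semigroup_variety \<Sigma>" and st: "stable \<Sigma>"
    and comm: "entails \<Sigma> (F vx vy) (F vy vx)"
    and nonconst: "\<not> entails \<Sigma> (F (sq vx) vx) (F (sq vx) vy)"
  shows "entails \<Sigma> (sq (sq vx)) (sq vx)"
proof (rule ccontr)
  assume not_idem: "\<not> entails \<Sigma> (sq (sq vx)) (sq vx)"
  obtain C op a c where model: "is_model C op \<Sigma>" and a: "a \<in> C" and c: "c \<in> C"
    and differ: "op (op a a) a \<noteq> op (op a a) c"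
    using nonconst by (rule sq_not_left_constantE)
  have aa: "op a a \<in> C"
    using model_closed[OF model a a] .
  have rearranged: "entails \<Sigma> (sq (sq vx)) (F vx (F (sq vx) vx))"
  proof (rule entailsI)
    fix C' op' and \<sigma> :: "nat \<Rightarrow> nat"
    assume model': "is_model C' op' \<Sigma>" and "\<And>j. \<sigma> j \<in> C'"
    then show "eval op' \<sigma> (sq (sq vx)) = eval op' \<sigma> (F vx (F (sq vx) vx))"
      by (simp add: model_assoc[OF sg model'] model_closed[OF model'])
  qed
  have "depends_on C op (F (Var 2) (sq vx)) 2"
  proof -
    have "op a (op a a) \<noteq> op c (op a a)"
      using differ model_comm[OF comm model aa a] model_comm[OF comm model aa c] by simp
    then show ?thesis
      unfolding depends_on_def using a c by (intro exI[of _ "\<lambda>_. a"] exI[of _ c]) auto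
  qed
  then have ess_sq: "[1] \<in> PEss (sq (sq vx)) \<Sigma>"
    using model unfolding PEss_def by (auto simp: numeral_2_eq_2)
  have "depends_on C op (F vx (F (Var 2) vx)) 2"
  proof -
    have shift: "op a (op y a) = op (op a a) y" if "y \<in> C" for y
      using model_comm[OF comm model that a] model_assoc[OF sg model a a that] by simp
    have "op a (op a a) \<noteq> op a (op c a)"
      using differ shift[OF a] shift[OF c] by simp
    then show ?thesis
      unfolding depends_on_def using a c by (intro exI[of _ "\<lambda>_. a"] exI[of _ c]) auto
  qed
  then have ess_rearranged: "[2, 1] \<in> PEss (F vx (F (sq vx) vx)) \<Sigma>"
    using model unfolding PEss_def by (auto simp: numeral_2_eq_2)
  have "entails \<Sigma> (replS \<Sigma> (sq (sq vx)) (sq vx) vy) (replS \<Sigma> (F vx (F (sq vx) vx)) (sq vx) vy)"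
    by (rule stable_replace[OF st rearranged ess_sq ess_rearranged]) simp_all
  moreover have "\<not> entails \<Sigma> vx (sq vx)"
    using not_idem entails_sym[OF entails_subst[where \<theta> = "\<lambda>_. sq vx"]] by fastforce
  moreover have "\<not> entails \<Sigma> (F (sq vx) vx) (sq vx)"
    using not_idem sq_idempotent_if_absorption[OF sg] by blast
  moreover have "\<not> entails \<Sigma> (F vx (F (sq vx) vx)) (sq vx)"
    using not_idem entails_trans[OF rearranged] by blast
  ultimately have "entails \<Sigma> (sq vy) (F vx (F vy vx))"
    using not_idem by (simp add: replS_F replS_Var)
  then have "entails \<Sigma> (sq vx) (F vx (sq vx))"
    using entails_subst[where \<theta> = "\<lambda>_. vx"] by fastforce
  then have "entails \<Sigma> (F (sq vx) vx) (sq vx)"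
    by (rule absorption_if_x_sq_eq_sq[OF sg entails_sym])
  then show False
    using not_idem sq_idempotent_if_absorption[OF sg] by blast
qed

text \<open>Commutative case, second half: with (x x)(x x) = x x we get
  (x x) x = (x x)(x (x x)); replacing x x by y gives y x = y (x y), which again collapses
  to x x = x (x x).\<close>
lemma stable_commutative_absorption_if_sq_idempotent:
  assumes sg: "semigroup_variety \<Sigma>" and st: "stable \<Sigma>"
    and comm: "entails \<Sigma> (F vx vy) (F vy vx)"
    and nonconst: "\<not> entails \<Sigma> (F (sq vx) vx) (F (sq vx) vy)"
    and idem: "entails \<Sigma> (sq (sq vx)) (sq vx)"
  shows "entails \<Sigma> (F (sq vx) vx) (sq vx)"
proof (rule ccontr)
  assume absorption_fails: "\<not> entails \<Sigma> (F (sq vx) vx) (sq vx)"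
  have cube_collapse: "op' b (op' b (op' b b)) = op' b b"
    if model': "is_model C' op' \<Sigma>" and b: "b \<in> C'" for C' op' b
  proof -
    have bb: "op' b b \<in> C'"
      using model_closed[OF model' b b] .
    have "op' b (op' b (op' b b)) = op' (op' b b) (op' b b)"
      using model_assoc[OF sg model' b b bb] by simp
    also have "\<dots> = op' b b"
      using entailsD[OF idem model', of "\<lambda>_. b"] b by simp
    finally show ?thesis .
  qed
  have expanded: "entails \<Sigma> (F (sq vx) vx) (F (sq vx) (F vx (sq vx)))"
  proof (rule entailsI)
    fix C' op' and \<sigma> :: "nat \<Rightarrow> nat"
    assume model': "is_model C' op' \<Sigma>" and vals: "\<And>j. \<sigma> j \<in> C'"
    then show "eval op' \<sigma> (F (sq vx) vx) = eval op' \<sigma> (F (sq vx) (F vx (sq vx)))"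
      by (simp add: model_assoc[OF sg model'] model_closed[OF model'] cube_collapse[OF model'])
  qed
  have ess_left: "[1] \<in> PEss (F (sq vx) vx) \<Sigma>"
    using absorption_fails absorption_if_left_constant by (blast intro: PEss_left_factor)
  obtain C op a c where model: "is_model C op \<Sigma>" and a: "a \<in> C" and c: "c \<in> C"
    and differ: "op (op a a) a \<noteq> op (op a a) c"
    using nonconst by (rule sq_not_left_constantE)
  have "depends_on C op (F (Var 2) (F vx (sq vx))) 2"
  proof -
    have aa: "op a a \<in> C" and aaa: "op a (op a a) \<in> C"
      using model_closed[OF model] a by auto
    have key: "op (op a y) (op a (op a a)) = op (op a a) y" if y: "y \<in> C" for y
    proof -
      have "op (op a y) (op a (op a a)) = op (op y a) (op a (op a a))"
        using model_comm[OF comm model a y] by simp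
      also have "\<dots> = op y (op a (op a (op a a)))"
        using model_assoc[OF sg model y a aaa] by simp
      also have "\<dots> = op y (op a a)"
        using cube_collapse[OF model a] by simp
      also have "\<dots> = op (op a a) y"
        using model_comm[OF comm model y aa] .
      finally show ?thesis .
    qed
    have "op (op a a) (op a (op a a)) \<noteq> op (op a c) (op a (op a a))"
      using differ key[OF a] key[OF c] by simp
    then show ?thesis
      unfolding depends_on_def using a aa model_closed[OF model a c]
      by (intro exI[of _ "(\<lambda>_. a)(2 := op a a)"] exI[of _ "op a c"]) auto
  qed
  then have ess_expanded: "[1] \<in> PEss (F (sq vx) (F vx (sq vx))) \<Sigma>"
    using model unfolding PEss_def by (auto simp: numeral_2_eq_2)
  have "entails \<Sigma> (replS \<Sigma> (F (sq vx) vx) (sq vx) vy) (replS \<Sigma> (F (sq vx) (F vx (sq vx))) (sq vx) vy)"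
    by (rule stable_replace[OF st expanded ess_left ess_expanded]) simp_all
  moreover have "\<not> entails \<Sigma> vx (sq vx)" and "\<not> entails \<Sigma> (F vx (sq vx)) (sq vx)"
    using absorption_fails absorption_if_var_eq_sq absorption_if_x_sq_eq_sq[OF sg] by blast+
  moreover have "\<not> entails \<Sigma> (F (sq vx) (F vx (sq vx))) (sq vx)"
    using absorption_fails entails_trans[OF expanded] by blast
  ultimately have "entails \<Sigma> (F vy vx) (F vy (F vx vy))"
    using absorption_fails by (simp add: replS_F replS_Var)
  then have "entails \<Sigma> (sq vx) (F vx (sq vx))"
    using entails_subst[where \<theta> = "\<lambda>_. vx"] by fastforce
  then show False
    using absorption_fails absorption_if_x_sq_eq_sq[OF sg entails_sym] by blast
qed

text \<open>Main result (Lemma 3.3): a stable semigroup variety satisfies (x x) x = x x.\<close>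
theorem lemma3p3:
  fixes \<Sigma> :: "idnt set"
  assumes "semigroup_variety \<Sigma>" and "nontrivial \<Sigma>" and "stable \<Sigma>"
  shows "entails \<Sigma> (F (F (Var 1) (Var 1)) (Var 1)) (F (Var 1) (Var 1))"
proof (cases "entails \<Sigma> (F (sq vx) vx) (F (sq vx) vy)")
  case True
  then show ?thesis
    by (rule stable_absorption_if_sq_left_constant[OF assms(1,3)])
next
  case nonconst: False
  from stable_commutative_or_absorption[OF assms(1,3)] show ?thesis
  proof
    assume comm: "entails \<Sigma> (F vx vy) (F vy vx)"
    have "entails \<Sigma> (sq (sq vx)) (sq vx)"
      by (rule stable_commutative_sq_idempotent[OF assms(1,3) comm nonconst])
    then show ?thesis
      by (rule stable_commutative_absorption_if_sq_idempotent[OF assms(1,3) comm nonconst])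
  next
    assume "entails \<Sigma> (F (sq vx) vx) (sq vx)"
    then show ?thesis .
  qed
qed

end
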